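(* Let $U$ be a finite set and let $f:2^U\to\mathbb{R}$ be non-decreasing and $\varepsilon$-approximately submodular for some $\varepsilon\ge 0$. Let $S\subseteq U$ satisfy: (i) $S$ is a Greedy Maximum Differential Set of $f$ (with respect to the ordering $s_1,\dots,s_{|S|}$); (ii) $f(S)=f_{\max}$; (iii) $\delta_{\min}>0$. Then for every set $C\subseteq U$ with $f(C)=f_{\max}$, $$|S|<\Big(1+\frac{\varepsilon}{\delta_{\min}}+\ln\Big(\frac{\delta_{\max}}{\delta_{\min}}\Big)\Big)\cdot|C|+1 .$$
   Context: For $f:2^U\to\mathbb{R}$, $A\subseteq U$ and $x\in U$, write $\Delta_x f(A)=f(A\cup\{x\})-f(A)$, and $f_{\max}=\max_{X\subseteq U} f(X)$. $f$ is non-decreasing if $A\subseteq B$ implies $f(A)\le f(B)$. $f$ is $\varepsilon$-approximately submodular ($\varepsilon\in[0,\infty)$) if for all $A\subseteq B\subseteq U$ and $x\in U\setminus B$, $\Delta_x f(B)\le \Delta_x f(A)+\varepsilon$. A set $S\subseteq U$ is a Greedy Maximum Differential Set of $f$ if its elements can be ordered $s_1,\dots,s_{|S|}$ such that, with $S_0=\emptyset$ and $S_i=\{s_1,\dots,s_i\}$, for every $i$ we have $\Delta_{s_i}f(S_{i-1})\ge \Delta_u f(S_{i-1})$ for all $u\in U$. For such an ordered $S$: $\delta_{\max}=\Delta_{s_1}f(\emptyset)=\max_{x\in U}\Delta_x f(\emptyset)$ and $\delta_{\min}=\min_{1\le i\le |S|}\Delta_{s_i}f(S_{i-1})$. *)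

theory Defs
  imports "HOL-Analysis.Analysis"
begin

definition delta :: "('a set \<Rightarrow> real) \<Rightarrow> 'a \<Rightarrow> 'a set \<Rightarrow> real" where
  "delta f x A = f (A \<union> {x}) - f A"

definition fmax :: "'a set \<Rightarrow> ('a set \<Rightarrow> real) \<Rightarrow> real" where
  "fmax U f = Max (f ` Pow U)"

definition nondecreasing :: "'a set \<Rightarrow> ('a set \<Rightarrow> real) \<Rightarrow> bool" where
  "nondecreasing U f \<longleftrightarrow> (\<forall>A B. A \<subseteq> B \<and> B \<subseteq> U \<longrightarrow> f A \<le> f B)"

definition approx_submodular :: "'a set \<Rightarrow> ('a set \<Rightarrow> real) \<Rightarrow> real \<Rightarrow> bool" where
  "approx_submodular U f \<epsilon> \<longleftrightarrow>
     (\<forall>A B x. A \<subseteq> B \<and> B \<subseteq> U \<and> x \<in> U - B \<longrightarrow> delta f x B \<le> delta f x A + \<epsilon>)"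

text \<open>The list s = [s_1,...,s_k] is a greedy ordering of the set (set s):
  S_i = set (take i s), and s ! i is the (i+1)-th element s_(i+1).\<close>
definition greedy_max_diff_order :: "'a set \<Rightarrow> ('a set \<Rightarrow> real) \<Rightarrow> 'a list \<Rightarrow> bool" where
  "greedy_max_diff_order U f s \<longleftrightarrow> distinct s \<and> set s \<subseteq> U \<and>
     (\<forall>i < length s. \<forall>u \<in> U. delta f u (set (take i s)) \<le> delta f (s ! i) (set (take i s)))"

definition delta_max :: "'a set \<Rightarrow> ('a set \<Rightarrow> real) \<Rightarrow> real" where
  "delta_max U f = Max ((\<lambda>x. delta f x {}) ` U)"

definition delta_min :: "('a set \<Rightarrow> real) \<Rightarrow> 'a list \<Rightarrow> real" where
  "delta_min f s = Min ((\<lambda>i. delta f (s ! i) (set (take i s))) ` {0..<length s})"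

end

theory Submission
  imports Defs
begin

text \<open>Let \<open>S\<^sub>i\<close> be the greedy prefixes, \<open>d\<^sub>i\<close> the greedy gains, \<open>g\<^sub>i = f(C) - f(S\<^sub>i)\<close> the
  remaining gap and \<open>m = |C|\<close>. Adding the elements of \<open>C\<close> to \<open>S\<^sub>i\<close> one at a time gains at most
  \<open>d\<^sub>i + \<epsilon>\<close> per element (approximate submodularity plus greediness), so \<open>g\<^sub>i \<le> m (d\<^sub>i + \<epsilon>)\<close>.
  Since \<open>g\<^sub>i\<^sub>+\<^sub>1 = g\<^sub>i - d\<^sub>i\<close>, the shifted gap \<open>g\<^sub>i - m \<epsilon>\<close> shrinks by the factor \<open>1 - 1/m\<close> per
  step and stays below \<open>exp(-i/m) m \<delta>max\<close>, while each remaining step gains at least \<open>\<delta>min\<close>,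
  so \<open>g\<^sub>i \<ge> (|S| - i) \<delta>min\<close>. Comparing the two bounds at \<open>i = \<lceil>m ln(\<delta>max/\<delta>min)\<rceil>\<close> gives
  \<open>|S| - i \<le> m + m \<epsilon>/\<delta>min\<close>.\<close>

lemma power_one_minus_le_exp:
  fixes x :: real
  assumes "x \<le> 1"
  shows "(1 - x) ^ n \<le> exp (- (real n * x))"
proof -
  have "(1 - x) ^ n \<le> exp (- x) ^ n"
    using assms exp_ge_add_one_self[of "- x"] by (intro power_mono) auto
  also have "\<dots> = exp (- (real n * x))"
    by (simp add: exp_of_nat_mult[symmetric])
  finally show ?thesis .
qed

lemma decreasing_sequence_lower_bound:
  fixes g :: "nat \<Rightarrow> real"
  assumes step: "\<And>i. i < k \<Longrightarrow> g (Suc i) + c \<le> g i"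
    and "0 \<le> g k" and "i \<le> k"
  shows "real (k - i) * c \<le> g i"
  using \<open>i \<le> k\<close>
proof (induction "k - i" arbitrary: i)
  case 0
  then show ?case using \<open>0 \<le> g k\<close> by simp
next
  case (Suc n)
  then have "i < k" by simp
  have "real (k - Suc i) * c \<le> g (Suc i)"
    using Suc.hyps(1)[of "Suc i"] Suc.hyps(2) \<open>i < k\<close> by simp
  moreover have "real (k - i) = real (k - Suc i) + 1"
    using \<open>i < k\<close> by simp
  ultimately show ?case
    using step[OF \<open>i < k\<close>] by (simp add: algebra_simps)
qed

lemma gap_geometric_decay:
  fixes g d :: "nat \<Rightarrow> real" and m :: real
  assumes "1 \<le> m"
    and step: "\<And>i. i < k \<Longrightarrow> g (Suc i) \<le> g i - d i"
    and gap: "\<And>i. i < k \<Longrightarrow> g i \<le> m * (d i + \<epsilon>)"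
    and "g 0 - m * \<epsilon> \<le> B" and "0 \<le> B" and "i \<le> k"
  shows "g i - m * \<epsilon> \<le> exp (- real i / m) * B"
proof -
  define q where "q = 1 - 1 / m"
  have "0 \<le> q"
    using \<open>1 \<le> m\<close> by (simp add: q_def)
  have "g i - m * \<epsilon> \<le> q ^ i * B"
    using \<open>i \<le> k\<close>
  proof (induction i)
    case 0
    then show ?case using \<open>g 0 - m * \<epsilon> \<le> B\<close> by simp
  next
    case (Suc i)
    then have "i < k" by simp
    have "m * g (Suc i) \<le> m * g i - m * d i"
      using step[OF \<open>i < k\<close>] \<open>1 \<le> m\<close> by (simp add: right_diff_distrib[symmetric])
    then have "g (Suc i) - m * \<epsilon> \<le> q * (g i - m * \<epsilon>)"
      using gap[OF \<open>i < k\<close>] \<open>1 \<le> m\<close> by (simp add: q_def field_simps)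
    also have "\<dots> \<le> q * (q ^ i * B)"
      using Suc \<open>0 \<le> q\<close> by (simp add: mult_left_mono)
    finally show ?case by simp
  qed
  also have "\<dots> \<le> exp (- real i / m) * B"
    using power_one_minus_le_exp[of "1 / m" i] \<open>1 \<le> m\<close> \<open>0 \<le> B\<close>
    by (intro mult_right_mono) (simp_all add: q_def)
  finally show ?thesis .
qed

locale greedy_recurrence =
  fixes k m :: nat and c \<epsilon> D :: real and d g :: "nat \<Rightarrow> real"
  assumes length_pos: "0 < k" and gain_lower_pos: "0 < c" and eps_nonneg: "0 \<le> \<epsilon>"
    and gain_ge: "\<And>i. i < k \<Longrightarrow> c \<le> d i"
    and gap_step: "\<And>i. i < k \<Longrightarrow> g (Suc i) \<le> g i - d i"
    and final_gap_nonneg: "0 \<le> g k"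
    and gap_le: "\<And>i. i < k \<Longrightarrow> g i \<le> real m * (d i + \<epsilon>)"
    and first_gain_le: "d 0 \<le> D"
begin

lemma gap_lower_bound:
  assumes "i \<le> k"
  shows "real (k - i) * c \<le> g i"
proof -
  have "g (Suc j) + c \<le> g j" if "j < k" for j
    using gap_step[OF that] gain_ge[OF that] by simp
  then show ?thesis
    using decreasing_sequence_lower_bound final_gap_nonneg assms by blast
qed

lemma gain_lower_le_upper: "c \<le> D"
  using gain_ge[OF length_pos] first_gain_le by simp

lemma m_pos: "0 < m"
proof (rule ccontr)
  assume "\<not> 0 < m"
  then have "g 0 \<le> 0" using gap_le[OF length_pos] by simp
  moreover have "0 < real k * c" using length_pos gain_lower_pos by simp
  ultimately show False using gap_lower_bound[of 0] by simp
qed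

lemma gap_upper_bound:
  assumes "i \<le> k"
  shows "g i - real m * \<epsilon> \<le> exp (- real i / real m) * (real m * D)"
proof (rule gap_geometric_decay[where d = d and k = k])
  show "g 0 - real m * \<epsilon> \<le> real m * D"
    using gap_le[OF length_pos] mult_left_mono[OF first_gain_le, of "real m"]
    by (simp add: algebra_simps)
  show "0 \<le> real m * D"
    using gain_lower_pos gain_lower_le_upper by simp
qed (use m_pos gap_step gap_le assms in auto)

lemma length_le_prefix_bound:
  assumes "i \<le> k" and "real m * ln (D / c) \<le> real i"
  shows "real k \<le> real i + real m + real m * \<epsilon> / c"
proof -
  have "exp (- real i / real m) \<le> exp (- ln (D / c))"
    using assms(2) m_pos by (simp add: field_simps)
  also have "\<dots> = c / D"
    using gain_lower_pos gain_lower_le_upper by (simp add: exp_minus)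
  finally have "exp (- real i / real m) * D \<le> c"
    using gain_lower_pos gain_lower_le_upper by (simp add: field_simps)
  from mult_left_mono[OF this, of "real m"]
  have "exp (- real i / real m) * (real m * D) \<le> real m * c"
    by (simp add: ac_simps)
  then have "real (k - i) * c \<le> real m * c + real m * \<epsilon>"
    using gap_lower_bound[OF assms(1)] gap_upper_bound[OF assms(1)] by linarith
  then have "real (k - i) \<le> real m + real m * \<epsilon> / c"
    using gain_lower_pos by (simp add: field_simps)
  then show ?thesis using assms(1) by simp
qed

text \<open>The prefix bound is applied to the first \<open>i\<close> past \<open>m ln(D/c)\<close>; if there is no such
  \<open>i \<le> k\<close>, then \<open>k\<close> itself is below \<open>m ln(D/c) + 1\<close>.\<close>
lemma length_bound: "real k < (1 + \<epsilon> / c + ln (D / c)) * real m + 1"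
proof -
  define L where "L = ln (D / c)"
  define i where "i = nat \<lceil>real m * L\<rceil>"
  have "0 \<le> L"
    using gain_lower_pos gain_lower_le_upper by (simp add: L_def)
  then have "real m * L \<le> real i" and "real i < real m * L + 1"
    by (simp_all add: i_def) linarith
  moreover have "real m * L + 1 \<le> (1 + \<epsilon> / c + L) * real m + 1"
    using eps_nonneg gain_lower_pos by (simp add: algebra_simps)
  ultimately show ?thesis
    using length_le_prefix_bound[of i] unfolding L_def
    by (cases "i \<le> k") (simp_all add: algebra_simps)
qed

end

lemma nondecreasing_delta_nonneg:
  assumes "nondecreasing U f" and "A \<subseteq> U" and "x \<in> U"
  shows "0 \<le> delta f x A"
  using assms unfolding nondecreasing_def delta_def by (simp add: subset_insertI)

lemma delta_le_delta_max:
  assumes "finite U" and "x \<in> U"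
  shows "delta f x {} \<le> delta_max U f"
  using assms by (simp add: delta_max_def)

lemma delta_min_le:
  assumes "i < length s"
  shows "delta_min f s \<le> delta f (s ! i) (set (take i s))"
  unfolding delta_min_def using assms by (intro Min_le) auto

lemma approx_submodular_union_gain_le:
  assumes "approx_submodular U f \<epsilon>" and "finite C" and "C \<subseteq> U" and "A \<subseteq> U"
    and gain_le: "\<And>u. u \<in> U \<Longrightarrow> delta f u A \<le> D" and "0 \<le> D + \<epsilon>"
  shows "f (A \<union> C) - f A \<le> real (card C) * (D + \<epsilon>)"
  using \<open>finite C\<close> \<open>C \<subseteq> U\<close>
proof (induction C rule: finite_induct)
  case empty
  then show ?case by simp
next
  case (insert c C)
  have "f (A \<union> C \<union> {c}) - f (A \<union> C) \<le> D + \<epsilon>"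
  proof (cases "c \<in> A \<union> C")
    case True
    then show ?thesis using \<open>0 \<le> D + \<epsilon>\<close> by (simp add: insert_absorb)
  next
    case False
    then have "A \<subseteq> A \<union> C \<and> A \<union> C \<subseteq> U \<and> c \<in> U - (A \<union> C)"
      using insert.prems \<open>A \<subseteq> U\<close> by simp
    then have "delta f c (A \<union> C) \<le> delta f c A + \<epsilon>"
      using \<open>approx_submodular U f \<epsilon>\<close> unfolding approx_submodular_def by blast
    moreover have "delta f c A \<le> D"
      using gain_le insert.prems by simp
    ultimately show ?thesis unfolding delta_def by linarith
  qed
  moreover have "A \<union> insert c C = A \<union> C \<union> {c}" by auto
  ultimately show ?case
    using insert by (simp add: algebra_simps)
qed

lemma greedy_gap_le:
  assumes "finite U" and "nondecreasing U f" and "approx_submodular U f \<epsilon>" and "0 \<le> \<epsilon>"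
    and greedy: "greedy_max_diff_order U f s" and "i < length s" and "C \<subseteq> U"
  shows "f C - f (set (take i s)) \<le> real (card C) * (delta f (s ! i) (set (take i s)) + \<epsilon>)"
proof -
  let ?S = "set (take i s)"
  have "set s \<subseteq> U"
    using greedy by (simp add: greedy_max_diff_order_def)
  then have "?S \<subseteq> U" and "s ! i \<in> U"
    using set_take_subset nth_mem[OF \<open>i < length s\<close>] by (fast, fast)
  have greedy_gain: "\<And>u. u \<in> U \<Longrightarrow> delta f u ?S \<le> delta f (s ! i) ?S"
    using greedy \<open>i < length s\<close> by (simp add: greedy_max_diff_order_def)
  from \<open>?S \<subseteq> U\<close> \<open>s ! i \<in> U\<close> have "0 \<le> delta f (s ! i) ?S + \<epsilon>"
    using nondecreasing_delta_nonneg[OF \<open>nondecreasing U f\<close>] \<open>0 \<le> \<epsilon>\<close> by simp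
  then have "f (?S \<union> C) - f ?S \<le> real (card C) * (delta f (s ! i) ?S + \<epsilon>)"
    using approx_submodular_union_gain_le[OF \<open>approx_submodular U f \<epsilon>\<close>
        finite_subset[OF \<open>C \<subseteq> U\<close> \<open>finite U\<close>] \<open>C \<subseteq> U\<close> \<open>?S \<subseteq> U\<close> greedy_gain]
    by blast
  moreover have "f C \<le> f (?S \<union> C)"
    using \<open>nondecreasing U f\<close> \<open>?S \<subseteq> U\<close> \<open>C \<subseteq> U\<close> unfolding nondecreasing_def
    by (meson Un_least Un_upper2)
  ultimately show ?thesis by linarith
qed

theorem mainTheorem1:
  fixes U :: "'a set" and f :: "'a set \<Rightarrow> real" and \<epsilon> :: real
    and s :: "'a list" and C :: "'a set"
  assumes "finite U"
    and "\<epsilon> \<ge> 0"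
    and "nondecreasing U f"
    and "approx_submodular U f \<epsilon>"
    and "greedy_max_diff_order U f s"
    and "s \<noteq> []"
    and "f (set s) = fmax U f"
    and "delta_min f s > 0"
    and "C \<subseteq> U"
    and "f C = fmax U f"
  shows "real (length s) <
           (1 + \<epsilon> / delta_min f s + ln (delta_max U f / delta_min f s)) * real (card C) + 1"
proof -
  define d where "d i = delta f (s ! i) (set (take i s))" for i
  define g where "g i = f C - f (set (take i s))" for i
  have "s ! 0 \<in> U"
    using \<open>greedy_max_diff_order U f s\<close> \<open>s \<noteq> []\<close> by (auto simp: greedy_max_diff_order_def)
  have "greedy_recurrence (length s) (card C) (delta_min f s) \<epsilon> (delta_max U f) d g"
  proof
    show "g (Suc i) \<le> g i - d i" if "i < length s" for i
      using that by (simp add: g_def d_def delta_def take_Suc_conv_app_nth)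
    show "g i \<le> real (card C) * (d i + \<epsilon>)" if "i < length s" for i
      using greedy_gap_le[OF assms(1,3,4,2,5) that assms(9)] by (simp add: g_def d_def)
    show "d 0 \<le> delta_max U f"
      using delta_le_delta_max[OF \<open>finite U\<close> \<open>s ! 0 \<in> U\<close>] by (simp add: d_def)
    show "delta_min f s \<le> d i" if "i < length s" for i
      using delta_min_le[OF that] by (simp add: d_def)
    show "0 \<le> g (length s)"
      using assms(7,10) by (simp add: g_def)
  qed (use assms(2,6,8) in simp_all)
  then show ?thesis
    by (rule greedy_recurrence.length_bound)
qed

end
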